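(* $\mathrm{GL}_6(\mathbb{F}_2)$ does not contain a subgroup isomorphic to $\mathrm{PSL}_2(\mathbb{F}_8)\times C_2$. *)

theory Defs
  imports "HOL-Analysis.Analysis" "HOL-Algebra.Algebra"
begin

definition GL6 :: "('k::field ^ 6 ^ 6) monoid" where
  "GL6 = \<lparr>carrier = {A. invertible A}, mult = (**), one = mat 1\<rparr>"

definition SL2 :: "('k::field ^ 2 ^ 2) monoid" where
  "SL2 = \<lparr>carrier = {A. det A = 1}, mult = (**), one = mat 1\<rparr>"

definition SL2_centre :: "('k::field ^ 2 ^ 2) set" where
  "SL2_centre = {mat c | c. c * c = 1}"

definition PSL2 :: "('k::field ^ 2 ^ 2) set monoid" where
  "PSL2 = SL2 Mod SL2_centre"

definition C2 :: "int monoid" where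
  "C2 = integer_mod_group 2"

end

theory Submission
  imports Defs "HOL-Number_Theory.Residues"
begin

text \<open>
  An element of order 9 in \<open>SL\<^sub>2(\<bbbF>\<^sub>8)\<close> is any matrix whose trace \<open>t\<close> satisfies
  \<open>t\<^sup>3 + t + 1 = 0\<close>; since \<open>PSL\<^sub>2(\<bbbF>\<^sub>8) = SL\<^sub>2(\<bbbF>\<^sub>8)\<close>, pairing it with the generator of
  \<open>C\<^sub>2\<close> gives an element of order 18 in \<open>PSL\<^sub>2(\<bbbF>\<^sub>8) \<times> C\<^sub>2\<close>. On the other hand no
  \<open>g \<in> GL\<^sub>6(\<bbbF>\<^sub>2)\<close> has order 18. The fixed spaces of the powers of \<open>g\<close> are subgroups of
  \<open>\<bbbF>\<^sub>2\<^sup>6\<close>, so they have \<open>2\<^sup>i\<close> elements, and \<open>g\<^sup>2\<close> permutes the vectors not fixed by \<open>g\<^sup>6\<close> in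
  orbits of length 9. For \<open>i < 6\<close>, \<open>9\<close> divides \<open>64 - 2\<^sup>i\<close> only if \<open>i = 0\<close>, so \<open>g\<^sup>6\<close> fixes only 0;
  then the nonzero vectors fixed by the involution \<open>g\<^sup>9\<close> also fall into orbits of length 9,
  which is impossible because \<open>9\<close> does not divide \<open>2\<^sup>j - 1\<close> for \<open>1 \<le> j \<le> 5\<close>.
\<close>

section \<open>Periodic points\<close>

lemma funpow_apply_add: "(f ^^ m) ((f ^^ n) x) = (f ^^ (m + n)) x"
  by (simp add: funpow_add)

lemma funpow_mult_fixed:
  assumes "(f ^^ n) x = x"
  shows "(f ^^ (n * k)) x = x"
  by (induction k) (simp_all add: funpow_add assms)

lemma funpow_fixed_dvd:
  assumes "d dvd n" "(f ^^ d) x = x"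
  shows "(f ^^ n) x = x"
  using assms funpow_mult_fixed by (metis dvdE)

lemma funpow_mod_period:
  assumes "(f ^^ n) x = x"
  shows "(f ^^ m) x = (f ^^ (m mod n)) x"
proof -
  have "(f ^^ m) x = (f ^^ (m mod n)) ((f ^^ (n * (m div n))) x)"
    by (simp add: funpow_apply_add)
  then show ?thesis using funpow_mult_fixed[OF assms] by simp
qed

lemma funpow_fixed_gcd:
  assumes "(f ^^ m) x = x" "(f ^^ n) x = x"
  shows "(f ^^ gcd m n) x = x"
  using assms
proof (induction m n rule: gcd_nat_induct)
  case (step m n)
  have "(f ^^ (m mod n)) x = x"
    using funpow_mod_period[OF step.prems(2), of m] step.prems(1) by simp
  then have "(f ^^ gcd n (m mod n)) x = x" using step.IH step.prems(2) by blast
  then show ?case by (simp add: gcd_non_0_nat step.hyps)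
qed simp

lemma funpow_prime_power_exact_period:
  assumes p: "Factorial_Ring.prime p" and "(f ^^ (p ^ Suc k)) x = x" "(f ^^ (p ^ k)) x \<noteq> x"
    and "0 < j" "j < p ^ Suc k"
  shows "(f ^^ j) x \<noteq> x"
proof
  assume "(f ^^ j) x = x"
  then have fixed: "(f ^^ gcd j (p ^ Suc k)) x = x" by (rule funpow_fixed_gcd[OF _ assms(2)])
  have "gcd j (p ^ Suc k) dvd p ^ Suc k" by simp
  then obtain i where i: "i \<le> Suc k" "gcd j (p ^ Suc k) = p ^ i"
    using divides_primepow_nat[OF p] by blast
  have "gcd j (p ^ Suc k) \<le> j" using assms(4) by (simp add: gcd_le1_nat)
  then have "gcd j (p ^ Suc k) < p ^ Suc k" using assms(5) by linarith
  then have "i \<noteq> Suc k" using i(2) by (intro notI) simp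
  then have "gcd j (p ^ Suc k) dvd p ^ k" using i by (simp add: le_imp_power_dvd)
  from funpow_fixed_dvd[OF this fixed] assms(3) show False by contradiction
qed

lemma funpow_inj_on_lessThan:
  assumes "(f ^^ n) x = x" "\<And>j. 0 < j \<Longrightarrow> j < n \<Longrightarrow> (f ^^ j) x \<noteq> x"
  shows "inj_on (\<lambda>i. (f ^^ i) x) {..<n}"
proof -
  have no_repeat: "(f ^^ i) x \<noteq> (f ^^ j) x" if "i < j" "j < n" for i j
  proof
    assume eq: "(f ^^ i) x = (f ^^ j) x"
    have "(f ^^ (n - j + i)) x = (f ^^ (n - j)) ((f ^^ j) x)"
      by (simp only: funpow_apply_add[symmetric] eq)
    also have "\<dots> = x"
      using assms(1) that(2) by (simp add: funpow_apply_add)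
    finally have "(f ^^ (n - j + i)) x = x" .
    moreover have "0 < n - j + i" "n - j + i < n" using that by auto
    ultimately show False using assms(2)[of "n - j + i"] by simp
  qed
  show ?thesis
  proof (rule inj_onI)
    fix i j assume "i \<in> {..<n}" "j \<in> {..<n}" "(f ^^ i) x = (f ^^ j) x"
    with no_repeat[of i j] no_repeat[of j i] show "i = j"
      by (cases i j rule: linorder_cases) auto
  qed
qed

lemma funpow_orbit_preimage:
  assumes "(f ^^ n) x = x" "(f ^^ n) y = y" "0 < n" "f y \<in> (\<lambda>i. (f ^^ i) x) ` {..<n}"
  shows "y \<in> (\<lambda>i. (f ^^ i) x) ` {..<n}"
proof -
  obtain i where i: "f y = (f ^^ i) x" using assms(4) by auto
  have "(f ^^ (n - 1)) (f y) = (f ^^ Suc (n - 1)) y"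
    by (simp only: funpow_Suc_right comp_apply)
  then have "y = (f ^^ (n - 1)) ((f ^^ i) x)" using assms(2,3) i by simp
  also have "\<dots> = (f ^^ ((n - 1 + i) mod n)) x"
    using funpow_mod_period[OF assms(1), of "n - 1 + i"] by (simp add: funpow_apply_add)
  finally show ?thesis by (rule image_eqI) (simp add: assms(3))
qed

lemma period_dvd_card:
  assumes "finite S" "0 < n" "\<And>x. x \<in> S \<Longrightarrow> f x \<in> S"
    and "\<And>x. x \<in> S \<Longrightarrow> (f ^^ n) x = x"
    and "\<And>x j. x \<in> S \<Longrightarrow> 0 < j \<Longrightarrow> j < n \<Longrightarrow> (f ^^ j) x \<noteq> x"
  shows "n dvd card S"
  using assms(1,3-5)
proof (induction S rule: finite_psubset_induct)
  case (psubset S)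
  show ?case
  proof (cases "S = {}")
    case False
    then obtain x where x: "x \<in> S" by blast
    define orb where "orb = (\<lambda>i. (f ^^ i) x) ` {..<n}"
    have "(f ^^ i) x \<in> S" for i
      using x by (induction i) (simp_all add: psubset.prems(1))
    then have orb_S: "orb \<subseteq> S" by (auto simp: orb_def)
    have card_orb: "card orb = n"
      using funpow_inj_on_lessThan[OF psubset.prems(2)[OF x] psubset.prems(3)[OF x]]
      by (simp add: orb_def card_image)
    have "x \<in> orb" unfolding orb_def using assms(2) by (intro image_eqI[of _ _ 0]) simp_all
    then have "S - orb \<subset> S" using x by blast
    then have "n dvd card (S - orb)"
    proof (rule psubset.IH)
      fix y assume y: "y \<in> S - orb"
      then show "(f ^^ n) y = y" using psubset.prems(2) by simp
      show "f y \<in> S - orb"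
      proof
        show "f y \<in> S" using y psubset.prems(1) by simp
        show "f y \<notin> orb"
        proof
          assume "f y \<in> orb"
          then have "y \<in> orb"
            unfolding orb_def
            by (rule funpow_orbit_preimage[OF psubset.prems(2)[OF x] \<open>(f ^^ n) y = y\<close> assms(2)])
          then show False using y by blast
        qed
      qed
      show "(f ^^ j) y \<noteq> y" if "0 < j" "j < n" for j
        using psubset.prems(3) y that by simp
    qed
    moreover have "card (S - orb) = card S - n"
      using card_orb orb_S psubset.hyps by (simp add: card_Diff_subset finite_subset)
    ultimately have "n dvd card S - n" by simp
    moreover have "n \<le> card S"
      using card_mono[OF psubset.hyps orb_S] card_orb by simp
    ultimately show ?thesis using dvd_diffD[OF _ dvd_refl] by blast
  qed simp
qed

lemma prime_power_period_dvd_card: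
  assumes "Factorial_Ring.prime p" "finite S" "\<And>x. x \<in> S \<Longrightarrow> f x \<in> S"
    and "\<And>x. x \<in> S \<Longrightarrow> (f ^^ (p ^ Suc k)) x = x" "\<And>x. x \<in> S \<Longrightarrow> (f ^^ (p ^ k)) x \<noteq> x"
  shows "p ^ Suc k dvd card S"
proof (rule period_dvd_card[where f = f])
  show "0 < p ^ Suc k" using prime_gt_0_nat[OF assms(1)] by simp
  show "(f ^^ j) x \<noteq> x" if "x \<in> S" "0 < j" "j < p ^ Suc k" for x j
    using funpow_prime_power_exact_period[OF assms(1) assms(4,5)[OF that(1)] that(2,3)] .
qed (fact assms(2), fact assms(3), fact assms(4))

lemma prime_3: "Factorial_Ring.prime (3::nat)"
proof -
  have "{2..<3::nat} = {2}" by auto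
  then show ?thesis by (simp add: prime_nat_iff')
qed

section \<open>Fixed points of additive maps on a group of order 64\<close>

definition additive_group :: "'a::ab_group_add monoid" where
  "additive_group = \<lparr>carrier = UNIV, mult = (+), one = 0\<rparr>"

lemma group_additive_group: "group (additive_group :: 'a::ab_group_add monoid)"
proof (rule groupI)
  fix x :: 'a
  show "\<exists>y \<in> carrier additive_group. y \<otimes>\<^bsub>additive_group\<^esub> x = \<one>\<^bsub>additive_group\<^esub>"
    by (rule bexI[of _ "- x"]) (simp_all add: additive_group_def)
qed (auto simp: additive_group_def add.assoc)

lemma carrier_additive_group [simp]: "carrier additive_group = UNIV"
  and mult_additive_group [simp]: "x \<otimes>\<^bsub>additive_group\<^esub> y = x + y"
  by (simp_all add: additive_group_def)

lemma inv_additive_group [simp]: "inv\<^bsub>additive_group\<^esub> x = - (x :: 'a::ab_group_add)"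
  by (rule group.inv_equality[OF group_additive_group]) (simp_all add: additive_group_def)

lemma card_additive_subgroup_dvd:
  fixes S :: "'a::{ab_group_add,finite} set"
  assumes "0 \<in> S" "\<And>x y. x \<in> S \<Longrightarrow> y \<in> S \<Longrightarrow> x + y \<in> S" "\<And>x. x \<in> S \<Longrightarrow> - x \<in> S"
  shows "card S dvd CARD('a)"
proof -
  have "subgroup S additive_group"
    by (rule group.subgroupI[OF group_additive_group]) (use assms in auto)
  then have "card (rcosets\<^bsub>additive_group\<^esub> S) * card S = CARD('a)"
    using group.lagrange[OF group_additive_group] by (simp add: order_def)
  then show ?thesis by (metis dvd_triv_right)
qed

lemma funpow_additive:
  fixes f :: "'a::ab_group_add \<Rightarrow> 'a"
  assumes "\<And>x y. f (x + y) = f x + f y"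
  shows "(f ^^ n) (x + y) = (f ^^ n) x + (f ^^ n) y"
  by (induction n) (simp_all add: assms)

lemma card_fixed_points_dvd:
  fixes f :: "'a::{ab_group_add,finite} \<Rightarrow> 'a"
  assumes add: "\<And>x y. f (x + y) = f x + f y"
  shows "card {x. f x = x} dvd CARD('a)"
proof (rule card_additive_subgroup_dvd)
  have zero: "f 0 = 0" using add[of 0 0] by simp
  show "0 \<in> {x. f x = x}" by (simp add: zero)
  show "x + y \<in> {x. f x = x}" if "x \<in> {x. f x = x}" "y \<in> {x. f x = x}" for x y
    using that by (simp add: add)
  show "- x \<in> {x. f x = x}" if "x \<in> {x. f x = x}" for x
    using that add[of "- x" x] by (simp add: zero eq_neg_iff_add_eq_0)
qed

lemma dvd_64_cases: "(d::nat) dvd 64 \<Longrightarrow> d \<in> {1, 2, 4, 8, 16, 32, 64}"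
proof -
  assume "d dvd 64"
  then obtain i where "i \<le> 6" "d = 2 ^ i"
    using divides_primepow_nat[of 2 d 6] by auto
  moreover from \<open>i \<le> 6\<close> have "i \<in> {0, 1, 2, 3, 4, 5, 6}" by auto
  ultimately show ?thesis by auto
qed

locale additive_period_18 =
  fixes f :: "'v::{ab_group_add,finite} \<Rightarrow> 'v"
  assumes add: "\<And>x y. f (x + y) = f x + f y"
    and char_2: "\<And>x::'v. x + x = 0"
    and card: "CARD('v) = 64"
    and period: "f ^^ 18 = id"
begin

lemma pow_add: "(f ^^ n) (x + y) = (f ^^ n) x + (f ^^ n) y"
  by (rule funpow_additive[where f = f, OF add])

lemma pow_zero: "(f ^^ n) 0 = 0"
  using pow_add[of n 0 0] by simp

lemma pow_commute: "(f ^^ m) ((f ^^ n) x) = (f ^^ n) ((f ^^ m) x)"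
  by (simp add: funpow_apply_add add.commute)

lemma pow_inverse: "(f ^^ (18 - n)) ((f ^^ n) x) = x" if "n \<le> 18"
  using period that by (simp add: funpow_apply_add)

lemma card_fixed_points_cases: "card {x. (f ^^ n) x = x} \<in> {1, 2, 4, 8, 16, 32, 64}"
  using dvd_64_cases card_fixed_points_dvd[of "f ^^ n", OF pow_add] card by simp

lemma card_fixed_points_less: "card {x. (f ^^ n) x = x} \<noteq> 64" if "f ^^ n \<noteq> id"
proof
  assume "card {x. (f ^^ n) x = x} = 64"
  then have "{x. (f ^^ n) x = x} = UNIV" using card by (simp add: card_subset_eq)
  then show False using that by (auto simp: fun_eq_iff)
qed

text \<open>As \<open>(f\<^sup>2)\<^sup>9 = id\<close> and \<open>(f\<^sup>2)\<^sup>3\<close> moves every point of \<open>S\<close>, \<open>S\<close> is a union of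
  \<open>f\<^sup>2\<close>-orbits of length 9.\<close>

lemma nine_dvd_card:
  assumes "\<And>x. x \<in> S \<Longrightarrow> (f ^^ 2) x \<in> S" "\<And>x. x \<in> S \<Longrightarrow> (f ^^ 6) x \<noteq> x"
  shows "9 dvd card S"
proof -
  have "3 ^ Suc 1 dvd card S"
  proof (rule prime_power_period_dvd_card[where f = "f ^^ 2"])
    show "((f ^^ 2) ^^ 3 ^ Suc 1) x = x" for x
      using period by (simp add: funpow_mult)
    show "((f ^^ 2) ^^ 3 ^ 1) x \<noteq> x" if "x \<in> S" for x
      using assms(2)[OF that] by (simp add: funpow_mult)
  qed (simp_all add: prime_3 assms(1))
  then show ?thesis by simp
qed

lemma fixed_points_sixth_power:
  assumes "f ^^ 6 \<noteq> id"
  shows "{x. (f ^^ 6) x = x} = {0}"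
proof -
  define K where "K = {x. (f ^^ 6) x = x}"
  have "9 dvd card (- K)"
  proof (rule nine_dvd_card)
    show "(f ^^ 2) x \<in> - K" if "x \<in> - K" for x
      using that pow_inverse[of 2 x] pow_commute[of 16 6 "(f ^^ 2) x"] by (auto simp: K_def)
  qed (simp add: K_def)
  moreover have "card (- K) = 64 - card K"
    using card by (simp add: Compl_eq_Diff_UNIV card_Diff_subset)
  ultimately have "card K = 1"
    using card_fixed_points_cases[of 6] card_fixed_points_less[OF assms] by (auto simp: K_def)
  moreover have "0 \<in> K" by (simp add: K_def pow_zero)
  ultimately show ?thesis unfolding K_def[symmetric] by (metis card_1_singletonE singletonD)
qed

lemma period_9_or_6: "f ^^ 9 = id \<or> f ^^ 6 = id"
proof (rule ccontr)
  assume "\<not> (f ^^ 9 = id \<or> f ^^ 6 = id)"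
  then have f9: "f ^^ 9 \<noteq> id" and f6: "f ^^ 6 \<noteq> id" by auto
  define F where "F = {x. (f ^^ 9) x = x}"
  obtain w where w: "(f ^^ 9) w \<noteq> w" using f9 by (auto simp: fun_eq_iff)
  define u where "u = (f ^^ 9) w + w"
  have "(f ^^ 9) u = (f ^^ 18) w + (f ^^ 9) w"
    by (simp add: u_def pow_add funpow_apply_add)
  then have "u \<in> F" using period by (simp add: F_def u_def add.commute)
  moreover have "u \<noteq> 0" using w char_2[of w] by (metis add_right_cancel u_def)
  moreover have "0 \<in> F" by (simp add: F_def pow_zero)
  ultimately have "2 \<le> card F" using card_mono[of F "{0, u}"] by auto
  moreover have "9 dvd card (F - {0})"
  proof (rule nine_dvd_card)
    fix x assume x: "x \<in> F - {0}"
    show "(f ^^ 2) x \<in> F - {0}"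
      using x pow_inverse[of 2 x] pow_commute[of 9 2 x] pow_zero by (auto simp: F_def)
    show "(f ^^ 6) x \<noteq> x" using x fixed_points_sixth_power[OF f6] by auto
  qed
  moreover have "card (F - {0}) = card F - 1" using \<open>0 \<in> F\<close> by simp
  ultimately show False
    using card_fixed_points_cases[of 9] card_fixed_points_less[OF f9] by (auto simp: F_def)
qed

end

lemma (in group) ord_eq_prime_power:
  assumes "x \<in> carrier G" "Factorial_Ring.prime p" "x [^] (p ^ Suc k) = \<one>" "x [^] (p ^ k) \<noteq> \<one>"
  shows "ord x = p ^ Suc k"
proof -
  obtain i where i: "i \<le> Suc k" "ord x = p ^ i"
    using assms(1,3) pow_eq_id divides_primepow_nat[OF assms(2)] by metis
  have "\<not> p ^ i dvd p ^ k" using assms(1,4) i(2) pow_eq_id by metis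
  then have "i = Suc k" using i(1) by (metis le_SucE le_imp_power_dvd)
  then show ?thesis using i(2) by simp
qed

lemma DirProd_nat_pow: "(a, b) [^]\<^bsub>G \<times>\<times> H\<^esub> (n::nat) = (a [^]\<^bsub>G\<^esub> n, b [^]\<^bsub>H\<^esub> n)"
  by (induction n) simp_all

lemma iso_ord:
  assumes G: "group G" and H: "group H" and h: "h \<in> iso G H" and x: "x \<in> carrier G"
  shows "group.ord H (h x) = group.ord G x"
proof -
  have hom: "h \<in> hom G H" and inj: "inj_on h (carrier G)"
    using h by (auto simp: iso_def bij_betw_def)
  have one: "h \<one>\<^bsub>G\<^esub> = \<one>\<^bsub>H\<^esub>"
    using G H hom by (simp add: group_hom.hom_one group_hom_def group_hom_axioms_def)
  have "h x [^]\<^bsub>H\<^esub> n = \<one>\<^bsub>H\<^esub> \<longleftrightarrow> group.ord G x dvd n" for n :: nat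
  proof -
    have "h x [^]\<^bsub>H\<^esub> n = h (x [^]\<^bsub>G\<^esub> n)"
      by (rule hom_nat_pow[OF hom x G H, symmetric])
    also have "\<dots> = \<one>\<^bsub>H\<^esub> \<longleftrightarrow> x [^]\<^bsub>G\<^esub> n = \<one>\<^bsub>G\<^esub>"
      using inj_on_eq_iff[OF inj monoid.nat_pow_closed[OF group.is_monoid[OF G] x] monoid.one_closed[OF group.is_monoid[OF G]]] one
      by simp
    finally show ?thesis using group.pow_eq_id[OF G x] by simp
  qed
  then show ?thesis using group.ord_unique[OF H hom_in_carrier[OF hom x]] by blast
qed

section \<open>Finite fields of order 2 and 8\<close>

lemma card_eq_power_of_2_imp_two_eq_zero:
  assumes "CARD('k::{field,finite}) = 2 ^ n"
  shows "(2::'k) = 0"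
proof -
  have "Factorial_Ring.prime CHAR('k)"
    by (rule prime_CHAR_semidom) (simp add: finite_imp_CHAR_pos)
  moreover have "CHAR('k) dvd 2 ^ n"
    using CHAR_dvd_CARD[where 'a = 'k] assms by simp
  ultimately have "CHAR('k) = 2"
    by (metis prime_dvd_power two_is_prime_nat primes_dvd_imp_eq)
  then show ?thesis using of_nat_CHAR[where 'a = 'k] by simp
qed

lemma finite_field_power_card_minus_one:
  fixes x :: "'k::{field,finite}"
  assumes "x \<noteq> 0"
  shows "x ^ (CARD('k) - 1) = 1"
proof -
  let ?N = "UNIV - {0::'k}"
  have "bij_betw ((*) x) ?N ?N"
    by (rule bij_betwI[where g = "(*) (inverse x)"]) (use assms in \<open>auto simp: field_simps\<close>)
  then have "prod id ?N = prod ((*) x) ?N"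
    using prod.reindex_bij_betw[of "(*) x" ?N ?N id] by simp
  also have "\<dots> = x ^ (CARD('k) - 1) * prod id ?N"
    by (simp add: prod.distrib card_Diff_subset)
  finally show ?thesis by simp
qed

lemma field_card_8_cubic_root:
  assumes "CARD('k) = 8"
  obtains t :: "'k::{field,finite}" where "t ^ 3 + t + 1 = 0"
proof -
  have two: "(2::'k) = 0" using card_eq_power_of_2_imp_two_eq_zero[of 3] assms by simp
  have "\<not> UNIV \<subseteq> {0::'k, 1}"
    using card_mono[of "{0::'k, 1}" UNIV] assms by (auto simp: card_insert_le_m1)
  then obtain x :: 'k where x: "x \<noteq> 0" "x \<noteq> 1" by blast
  have "x ^ 7 = 1" using finite_field_power_card_minus_one[OF x(1)] assms by simp
  then have "x ^ 8 = x" using power_Suc[of x 7] by simp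
  moreover have "x * (x + 1) * (x ^ 3 + x + 1) * (x ^ 3 + x ^ 2 + 1)
      = x ^ 8 + x + 2 * (x ^ 7 + x ^ 6 + 2 * x ^ 5 + 2 * x ^ 4 + x ^ 3 + x ^ 2)"
    by (simp add: algebra_simps eval_nat_numeral)
  moreover have "x + 1 \<noteq> 0"
    using x two by (metis eq_neg_iff_add_eq_0 one_add_one)
  ultimately have "x ^ 3 + x + 1 = 0 \<or> x ^ 3 + x ^ 2 + 1 = 0"
    using x two by (simp add: mult_2[symmetric])
  then show thesis
  proof
    assume "x ^ 3 + x ^ 2 + 1 = 0"
    then have "inverse x ^ 3 * (x ^ 3 + x ^ 2 + 1) = 0" by simp
    then have "inverse x ^ 3 + inverse x + 1 = 0"
      using x(1) by (simp add: algebra_simps eval_nat_numeral)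
    then show thesis by (rule that)
  qed (rule that)
qed

lemma group_GL6: "group (GL6 :: ('k::field ^ 6 ^ 6) monoid)"
proof (rule groupI)
  fix A :: "'k ^ 6 ^ 6"
  assume "A \<in> carrier GL6"
  then obtain B where "A ** B = mat 1" "B ** A = mat 1"
    by (auto simp: GL6_def invertible_def)
  then show "\<exists>B \<in> carrier GL6. B \<otimes>\<^bsub>GL6\<^esub> A = \<one>\<^bsub>GL6\<^esub>"
    by (auto simp: GL6_def invertible_def)
next
  show "\<one>\<^bsub>GL6\<^esub> \<in> carrier (GL6 :: ('k ^ 6 ^ 6) monoid)"
    by (auto simp: GL6_def invertible_def)
qed (simp_all add: GL6_def invertible_mult matrix_mul_assoc)

lemma group_SL2: "group (SL2 :: ('k::field ^ 2 ^ 2) monoid)"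
proof (rule groupI)
  fix A :: "'k ^ 2 ^ 2"
  assume A: "A \<in> carrier SL2"
  then have "invertible A" by (simp add: SL2_def invertible_det_nz)
  then obtain B where B: "B ** A = mat 1" by (auto simp: invertible_def)
  then have "det B = 1" using A det_mul[of B A] by (simp add: SL2_def)
  then show "\<exists>B \<in> carrier SL2. B \<otimes>\<^bsub>SL2\<^esub> A = \<one>\<^bsub>SL2\<^esub>"
    using B by (auto simp: SL2_def)
qed (auto simp: SL2_def det_mul matrix_mul_assoc)

lemma mat_mult_commute: "mat c ** A = A ** (mat c :: 'k::comm_ring_1 ^ 'n ^ 'n)"
  unfolding matrix_matrix_mult_def mat_def
  by (auto simp: vec_eq_iff if_distrib if_distribR sum.delta'[OF finite] sum.delta[OF finite]
      mult.commute cong: if_cong)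

lemma mat_mult_eq: "(mat c ** A) $ i $ j = c * (A $ i $ j :: 'k::comm_ring_1)"
  unfolding matrix_matrix_mult_def mat_def
  by (simp add: if_distrib if_distribR sum.delta'[OF finite] cong: if_cong)

lemma mat_mult_mat: "mat c ** mat d = (mat (c * d) :: 'k::comm_ring_1 ^ 'n ^ 'n)"
  by (simp add: vec_eq_iff mat_mult_eq) (simp add: mat_def)

lemma mat_one_in_SL2_centre: "mat 1 \<in> SL2_centre"
  unfolding SL2_centre_def by (rule CollectI, rule exI[of _ 1]) simp

lemma SL2_centre_normal: "SL2_centre \<lhd> (SL2 :: ('k::field ^ 2 ^ 2) monoid)"
proof -
  have det: "det (mat c :: 'k ^ 2 ^ 2) = c * c" for c
    by (simp add: det_2 mat_def)
  have inv: "inv\<^bsub>SL2\<^esub> (mat c) = (mat c :: 'k ^ 2 ^ 2)" if "c * c = 1" for c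
    by (rule group.inv_equality[OF group_SL2]) (simp_all add: SL2_def det mat_mult_mat that)
  have "subgroup (SL2_centre :: ('k ^ 2 ^ 2) set) SL2"
  proof (rule group.subgroupI[OF group_SL2])
    show "SL2_centre \<subseteq> carrier (SL2 :: ('k ^ 2 ^ 2) monoid)"
      by (auto simp: SL2_centre_def SL2_def det)
    show "inv\<^bsub>SL2\<^esub> A \<in> SL2_centre" if "A \<in> SL2_centre" for A :: "'k ^ 2 ^ 2"
      using that inv by (auto simp: SL2_centre_def)
    show "A \<otimes>\<^bsub>SL2\<^esub> B \<in> SL2_centre" if "A \<in> SL2_centre" "B \<in> SL2_centre" for A B :: "'k ^ 2 ^ 2"
      using that by (auto simp: SL2_centre_def SL2_def mat_mult_mat) (metis mult.commute mult.left_commute mult_1_right)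
    show "(SL2_centre :: ('k ^ 2 ^ 2) set) \<noteq> {}" using mat_one_in_SL2_centre by blast
  qed
  then show ?thesis
    by (rule group.normalI[OF group_SL2])
      (auto simp: r_coset_def l_coset_def SL2_centre_def SL2_def mat_mult_commute)
qed

lemma group_PSL2: "group (PSL2 :: ('k::field ^ 2 ^ 2) set monoid)"
  unfolding PSL2_def by (rule normal.factorgroup_is_group[OF SL2_centre_normal])

lemma SL2_centre_char_2:
  assumes "(2::'k::field) = 0"
  shows "(SL2_centre :: ('k ^ 2 ^ 2) set) = {mat 1}"
proof
  have "c = 1" if "c * c = 1" for c :: 'k
  proof -
    have "(c - 1) * (c - 1) = c * c + 1 - 2 * c" by (simp add: algebra_simps)
    then have "(c - 1) * (c - 1) = 0" using that assms by simp
    then show ?thesis by simp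
  qed
  then show "(SL2_centre :: ('k ^ 2 ^ 2) set) \<subseteq> {mat 1}" unfolding SL2_centre_def by blast
qed (simp add: mat_one_in_SL2_centre)

section \<open>Elements of order 9 in \<open>SL\<^sub>2\<close>\<close>

lemma trace_cube_2x2:
  fixes A :: "'k::comm_ring_1 ^ 2 ^ 2"
  shows "trace (A ** A ** A) = trace A ^ 3 - 3 * det A * trace A"
  by (simp add: trace_def sum_2 matrix_matrix_mult_def det_2 power3_eq_cube algebra_simps)

lemma cayley_hamilton_2x2:
  fixes A :: "'k::comm_ring_1 ^ 2 ^ 2"
  shows "A ** A = mat (trace A) ** A - mat (det A)"
  by (simp add: vec_eq_iff forall_2 matrix_matrix_mult_def sum_2 mat_def trace_def det_2 algebra_simps)

lemma cube_eq_one_2x2: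
  fixes A :: "'k::comm_ring_1 ^ 2 ^ 2"
  assumes "trace A = -1" "det A = 1"
  shows "A ** A ** A = mat 1"
proof -
  have neg: "mat (-1) ** B = - B" for B :: "'k ^ 2 ^ 2"
    by (simp add: vec_eq_iff forall_2 matrix_matrix_mult_def sum_2 mat_def)
  have sq: "A ** A = - A - mat 1"
    using cayley_hamilton_2x2[of A] assms by (simp add: neg)
  have "A ** A ** A = (- A - mat 1) ** A" by (simp add: sq)
  also have "\<dots> = - (A ** A) - A"
    by (simp add: vec_eq_iff forall_2 matrix_matrix_mult_def sum_2 mat_def algebra_simps)
  also have "\<dots> = mat 1" by (simp add: sq)
  finally show ?thesis .
qed

lemma SL2_element_with_trace: "\<exists>A \<in> carrier (SL2 :: ('k::field ^ 2 ^ 2) monoid). trace A = t"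
proof
  let ?A = "(\<chi> i j. if i = 1 then (if j = 1 then 0 else -1) else (if j = 1 then 1 else t)) :: 'k ^ 2 ^ 2"
  show "?A \<in> carrier SL2" by (simp add: SL2_def det_2)
  show "trace ?A = t" by (simp add: trace_def sum_2)
qed

lemma SL2_pow_3: "A [^]\<^bsub>SL2\<^esub> (3::nat) = A ** A ** A"
  by (simp add: SL2_def numeral_3_eq_3)

text \<open>Over \<open>\<complex>\<close> the roots of \<open>t\<^sup>3 - 3t + 1\<close> are the traces \<open>2 cos (2\<pi>k/9)\<close>, \<open>k = 1, 2, 4\<close>, of the
  rotations of order 9. In general \<open>B = A\<^sup>3\<close> has trace \<open>t\<^sup>3 - 3t = -1\<close>, hence \<open>B\<^sup>3 = 1\<close> by
  Cayley-Hamilton, and \<open>B \<noteq> 1\<close> because \<open>trace 1 = 2 \<noteq> -1\<close> outside characteristic 3.\<close>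

lemma ord_SL2_eq_9:
  fixes A :: "'k::field ^ 2 ^ 2"
  assumes A: "A \<in> carrier SL2" and t: "trace A ^ 3 - 3 * trace A + 1 = 0" and "(3::'k) \<noteq> 0"
  shows "group.ord SL2 A = 9"
proof -
  interpret SL2: group "SL2 :: ('k ^ 2 ^ 2) monoid" by (rule group_SL2)
  let ?B = "A [^]\<^bsub>SL2\<^esub> (3::nat)"
  have "det A = 1" using A by (simp add: SL2_def)
  then have "trace ?B = -1" using t by (simp add: SL2_pow_3 trace_cube_2x2 algebra_simps)
  moreover have "det ?B = 1" using A SL2.nat_pow_closed by (simp add: SL2_def)
  ultimately have "?B [^]\<^bsub>SL2\<^esub> (3::nat) = \<one>\<^bsub>SL2\<^esub>"
    by (simp add: SL2_pow_3 cube_eq_one_2x2) (simp add: SL2_def)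
  then have "A [^]\<^bsub>SL2\<^esub> (3 ^ Suc 1 :: nat) = \<one>\<^bsub>SL2\<^esub>" using A by (simp add: SL2.nat_pow_pow)
  moreover have "A [^]\<^bsub>SL2\<^esub> (3 ^ 1 :: nat) \<noteq> \<one>\<^bsub>SL2\<^esub>"
  proof
    assume "A [^]\<^bsub>SL2\<^esub> (3 ^ 1 :: nat) = \<one>\<^bsub>SL2\<^esub>"
    then have "trace ?B = 2" by (simp add: SL2_def trace_I)
    then show False using \<open>trace ?B = -1\<close> \<open>(3::'k) \<noteq> 0\<close> by (simp add: eq_neg_iff_add_eq_0)
  qed
  ultimately show ?thesis using SL2.ord_eq_prime_power[OF A prime_3, of 1] by simp
qed

lemma SL2_F8_element_of_order_9:
  assumes "CARD('k) = 8"
  obtains A :: "'k::{field,finite} ^ 2 ^ 2" where "A \<in> carrier SL2" "group.ord SL2 A = 9"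
proof -
  have two: "(2::'k) = 0" using card_eq_power_of_2_imp_two_eq_zero[of 3] assms by simp
  obtain t :: 'k where t: "t ^ 3 + t + 1 = 0" using field_card_8_cubic_root assms by blast
  obtain A where A: "A \<in> carrier SL2" "trace A = t" using SL2_element_with_trace by blast
  have "t ^ 3 - 3 * t + 1 = t ^ 3 + t + 1 - 2 * 2 * t" by (simp add: algebra_simps)
  then have "trace A ^ 3 - 3 * trace A + 1 = 0" using t two A(2) by simp
  moreover have "(3::'k) = 2 + 1" by simp
  then have "(3::'k) \<noteq> 0" using two by simp
  ultimately have "group.ord SL2 A = 9" using ord_SL2_eq_9[OF A(1)] by blast
  with A(1) show thesis by (rule that)
qed

lemma PSL2_times_C2_element_of_order_18:
  assumes "CARD('k) = 8"
  obtains e where "e \<in> carrier ((PSL2 :: ('k::{field,finite} ^ 2 ^ 2) set monoid) \<times>\<times> C2)"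
    and "group.ord ((PSL2 :: ('k ^ 2 ^ 2) set monoid) \<times>\<times> C2) e = 18"
proof -
  let ?T = "(PSL2 :: ('k ^ 2 ^ 2) set monoid) \<times>\<times> C2"
  let ?Z = "SL2_centre :: ('k ^ 2 ^ 2) set"
  interpret SL2: group "SL2 :: ('k ^ 2 ^ 2) monoid" by (rule group_SL2)
  have two: "(2::'k) = 0" using card_eq_power_of_2_imp_two_eq_zero[of 3] assms by simp
  obtain A :: "'k ^ 2 ^ 2" where A: "A \<in> carrier SL2" and ord_A: "group.ord SL2 A = 9"
    using SL2_F8_element_of_order_9 assms by blast
  define e where "e = (?Z #>\<^bsub>SL2\<^esub> A, 1 :: int)"
  have T: "group ?T" by (rule DirProd_group[OF group_PSL2]) (simp add: C2_def)
  have e: "e \<in> carrier ?T"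
    using A by (simp add: e_def PSL2_def C2_def carrier_FactGroup carrier_integer_mod_group
        SL2.rcosetsI SL2_centre_normal normal_imp_subgroup subgroup.subset)
  have "e [^]\<^bsub>?T\<^esub> n = \<one>\<^bsub>?T\<^esub> \<longleftrightarrow> 18 dvd n" for n :: nat
  proof -
    have "(\<lambda>B. ?Z #>\<^bsub>SL2\<^esub> B) \<in> hom SL2 PSL2"
      unfolding PSL2_def by (rule normal.r_coset_hom_Mod[OF SL2_centre_normal])
    then have "(?Z #>\<^bsub>SL2\<^esub> A) [^]\<^bsub>PSL2\<^esub> n = ?Z #>\<^bsub>SL2\<^esub> (A [^]\<^bsub>SL2\<^esub> n)"
      by (rule hom_nat_pow[OF _ A group_SL2 group_PSL2, symmetric])
    then have "e [^]\<^bsub>?T\<^esub> n = (?Z #>\<^bsub>SL2\<^esub> (A [^]\<^bsub>SL2\<^esub> n), int n mod 2)"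
      by (simp add: e_def DirProd_nat_pow C2_def)
    moreover have "?Z #>\<^bsub>SL2\<^esub> B = ?Z \<longleftrightarrow> B \<in> ?Z" if "B \<in> carrier SL2" for B
      using that SL2.coset_join2 SL2.rcos_self normal_imp_subgroup[OF SL2_centre_normal] by blast
    moreover have "A [^]\<^bsub>SL2\<^esub> n \<in> ?Z \<longleftrightarrow> 9 dvd n"
      using SL2.pow_eq_id[OF A] ord_A by (simp add: SL2_centre_char_2[OF two] SL2_def)
    moreover have "int n mod 2 = 0 \<longleftrightarrow> 2 dvd n" by presburger
    moreover have "9 dvd n \<and> 2 dvd n \<longleftrightarrow> 18 dvd n" by presburger
    ultimately show ?thesis using A by (simp add: PSL2_def C2_def)
  qed
  then have "group.ord ?T e = 18" using group.ord_unique[OF T e] by blast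
  with e show thesis by (rule that)
qed

lemma funpow_mult_vec_eq_GL6_pow: "((\<lambda>v. g *v v) ^^ n) v = (g [^]\<^bsub>GL6\<^esub> n) *v v"
  by (induction n arbitrary: v)
    (simp_all add: GL6_def funpow_Suc_right matrix_vector_mul_assoc del: funpow.simps)

lemma GL6_F2_no_element_of_order_18:
  fixes g :: "'a::{field,finite} ^ 6 ^ 6"
  assumes "CARD('a) = 2" and "\<And>n::nat. g [^]\<^bsub>GL6\<^esub> n = mat 1 \<longleftrightarrow> 18 dvd n"
  shows False
proof -
  define f where "f = (\<lambda>v :: 'a ^ 6. g *v v)"
  have period: "f ^^ n = id \<longleftrightarrow> 18 dvd n" for n
    using assms(2)[of n] matrix_eq[of "g [^]\<^bsub>GL6\<^esub> n" "mat 1"]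
    by (simp add: fun_eq_iff f_def funpow_mult_vec_eq_GL6_pow)
  have "(2::'a) = 0" using card_eq_power_of_2_imp_two_eq_zero[of 1] assms(1) by simp
  then have "x + x = 0" for x :: "'a ^ 6"
    by (simp add: vec_eq_iff mult_2[symmetric])
  moreover have "f (x + y) = f x + f y" for x y by (simp add: f_def matrix_vector_right_distrib)
  moreover have "CARD('a ^ 6) = 64" using assms(1) by simp
  ultimately have "additive_period_18 f" using period[of 18] by unfold_locales simp_all
  then show False using additive_period_18.period_9_or_6[of f] period[of 9] period[of 6] by simp
qed

theorem lemma3p21:
  fixes F2 :: "'a::{field, finite} itself" and F8 :: "'b::{field, finite} itself"
  assumes "CARD('a) = 2" and "CARD('b) = 8"
  shows "\<not> (\<exists>H. subgroup H (GL6 :: ('a ^ 6 ^ 6) monoid) \<and>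
             ((GL6 :: ('a ^ 6 ^ 6) monoid)\<lparr>carrier := H\<rparr>) \<cong>
               DirProd (PSL2 :: ('b ^ 2 ^ 2) set monoid) C2)"
proof
  let ?GL = "GL6 :: ('a ^ 6 ^ 6) monoid" and ?T = "(PSL2 :: ('b ^ 2 ^ 2) set monoid) \<times>\<times> C2"
  assume "\<exists>H. subgroup H ?GL \<and> ?GL\<lparr>carrier := H\<rparr> \<cong> ?T"
  then obtain H \<phi> where H: "subgroup H ?GL" and \<phi>: "\<phi> \<in> iso (?GL\<lparr>carrier := H\<rparr>) ?T"
    by (auto simp: is_iso_def)
  obtain e where e: "e \<in> carrier ?T" "group.ord ?T e = 18"
    using PSL2_times_C2_element_of_order_18 assms(2) by blast
  moreover have "carrier ?T = \<phi> ` H"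
    using \<phi> by (simp add: iso_def bij_betw_def)
  ultimately obtain g where g: "g \<in> H" "\<phi> g = e" by (metis imageE)
  have G: "group (?GL\<lparr>carrier := H\<rparr>)" by (rule subgroup.subgroup_is_group[OF H group_GL6])
  have T: "group ?T" by (rule DirProd_group[OF group_PSL2]) (simp add: C2_def)
  have "group.ord (?GL\<lparr>carrier := H\<rparr>) g = 18"
    using iso_ord[OF G T \<phi>, of g] g e(2) by simp
  moreover have "g [^]\<^bsub>?GL\<lparr>carrier := H\<rparr>\<^esub> n = g [^]\<^bsub>?GL\<^esub> n" for n :: nat
    by (simp add: nat_pow_def)
  ultimately have "g [^]\<^bsub>?GL\<^esub> n = mat 1 \<longleftrightarrow> 18 dvd n" for n :: nat
    using group.pow_eq_id[OF G, of g n] g(1) by (simp add: GL6_def)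
  then show False by (rule GL6_F2_no_element_of_order_18[OF assms(1)])
qed

end
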